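(* Let $g:\mathbb{R}^n\to\mathbb{R}^m$ be continuously differentiable, $K\subseteq\mathbb{R}^m$ closed, $\bar x\in C:=g^{-1}(K)$, $d\in\mathbb{R}^n$, and assume MSCQ holds at $\bar x$ in direction $d$ for the system $g(x)\in K$ with modulus $\kappa$. Then $$N_{g^{-1}(K)}(\bar x;d)\subseteq\{v\in\mathbb{R}^n\mid \exists\lambda\in N_K(g(\bar x);\nabla g(\bar x)d)\cap\kappa\|v\|B_{\mathbb{R}^m}\text{ with } v=\nabla g(\bar x)^T\lambda\}.$$
   Context: $B_{\mathbb{R}^m}$ is the closed unit ball. The directional limiting normal cone of a closed set $S$ at $\bar x$ in direction $d$ is $N_S(\bar x;d):=\limsup_{t\downarrow0,\,d'\to d}\hat N_S(\bar x+td')$, where $\hat N_S$ is the Fréchet normal cone (empty outside $S$). Directional neighborhood: for $\rho,\delta>0$, $V_{\rho,\delta}(d):=\{w\in\delta B_{\mathbb{R}^n}\mid \|\,\|d\|w-\|w\|d\,\|\le\rho\|w\|\|d\|\}$. MSCQ at $\bar x$ in direction $d$ for $g(x)\in K$ means there are $\rho,\delta,\kappa>0$ with $\mathrm{dist}(x,g^{-1}(K))\le\kappa\,\mathrm{dist}(g(x),K)$ for all $x\in\bar x+V_{\rho,\delta}(d)$; the modulus is the infimum of such $\kappa$ over all admissible triples $(\rho,\delta,\kappa)$. *)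

theory Defs
  imports "HOL-Analysis.Analysis"
begin

definition frechet_normal :: "('a::euclidean_space) set \<Rightarrow> 'a \<Rightarrow> 'a set" where
  "frechet_normal S x = (if x \<in> S then
     {v. \<forall>e>0. \<exists>r>0. \<forall>y\<in>S. norm (y - x) < r \<longrightarrow> inner v (y - x) \<le> e * norm (y - x)}
   else {})"

definition dir_normal :: "('a::euclidean_space) set \<Rightarrow> 'a \<Rightarrow> 'a \<Rightarrow> 'a set" where
  "dir_normal S x d = {v. \<exists>t dd vv. (\<forall>k. t k > 0) \<and> t \<longlonglongrightarrow> 0 \<and> dd \<longlonglongrightarrow> d \<and> vv \<longlonglongrightarrow> v
      \<and> (\<forall>k. vv k \<in> frechet_normal S (x + t k *\<^sub>R dd k))}"

definition dir_nbhd :: "real \<Rightarrow> real \<Rightarrow> ('a::euclidean_space) \<Rightarrow> 'a set" where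
  "dir_nbhd \<rho> \<delta> d = {w. norm w \<le> \<delta> \<and>
      norm (norm d *\<^sub>R w - norm w *\<^sub>R d) \<le> \<rho> * norm w * norm d}"

definition mscq_triple :: "('a::euclidean_space \<Rightarrow> 'b::euclidean_space) \<Rightarrow> 'b set \<Rightarrow> 'a \<Rightarrow> 'a
    \<Rightarrow> real \<Rightarrow> real \<Rightarrow> real \<Rightarrow> bool" where
  "mscq_triple g K xbar d \<rho> \<delta> \<kappa> \<longleftrightarrow> \<rho> > 0 \<and> \<delta> > 0 \<and> \<kappa> > 0 \<and>
     (\<forall>x \<in> (\<lambda>w. xbar + w) ` dir_nbhd \<rho> \<delta> d. infdist x (g -` K) \<le> \<kappa> * infdist (g x) K)"

definition mscq_dir :: "('a::euclidean_space \<Rightarrow> 'b::euclidean_space) \<Rightarrow> 'b set \<Rightarrow> 'a \<Rightarrow> 'a \<Rightarrow> bool" where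
  "mscq_dir g K xbar d \<longleftrightarrow> (\<exists>\<rho> \<delta> \<kappa>. mscq_triple g K xbar d \<rho> \<delta> \<kappa>)"

definition mscq_modulus :: "('a::euclidean_space \<Rightarrow> 'b::euclidean_space) \<Rightarrow> 'b set \<Rightarrow> 'a \<Rightarrow> 'a \<Rightarrow> real" where
  "mscq_modulus g K xbar d = Inf {\<kappa>. \<exists>\<rho> \<delta>. mscq_triple g K xbar d \<rho> \<delta> \<kappa>}"

end

theory Submission
  imports Defs
begin

text \<open>
  Let \<open>v\<close> be a directional limiting normal to \<open>C = g -` K\<close>, realised by Frechet normals
  \<open>v\<^sub>k\<close> at \<open>x\<^sub>k = xbar + t\<^sub>k d\<^sub>k\<close>. For \<open>k\<close> large the MSCQ error bound holds on a ball
  around \<open>x\<^sub>k\<close> of radius proportional to \<open>t\<^sub>k\<close>, and turns the Frechet inequality for \<open>v\<^sub>k\<close>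
  into an exact-penalty inequality
  \<open>\<langle>v\<^sub>k, y - x\<^sub>k\<rangle> \<le> \<epsilon>\<^sub>k |y - x\<^sub>k| + (\<epsilon>\<^sub>k + |v\<^sub>k|) \<kappa> dist (g y) K\<close>.
  Minimising a smoothed version of the difference over a small ball and applying Fermat's
  rule at the (interior) minimiser yields \<open>y\<^sub>k\<close> close to \<open>x\<^sub>k\<close>, a nearest point \<open>z\<^sub>k \<in> K\<close>
  to \<open>g y\<^sub>k\<close> and a proximal normal \<open>\<lambda>\<^sub>k\<close> to \<open>K\<close> at \<open>z\<^sub>k\<close> with
  \<open>|\<lambda>\<^sub>k| \<le> (\<epsilon>\<^sub>k + |v\<^sub>k|) \<kappa>\<close> and \<open>v\<^sub>k \<approx> \<nabla>g(y\<^sub>k)\<^sup>T \<lambda>\<^sub>k\<close>.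
  As \<open>z\<^sub>k\<close> is no farther from \<open>g y\<^sub>k\<close> than \<open>g x\<^sub>k\<close> is, \<open>(z\<^sub>k - g xbar) / t\<^sub>k \<rightarrow> \<nabla>g(xbar) d\<close>,
  so every cluster point of \<open>\<lambda>\<^sub>k\<close> is a directional normal to \<open>K\<close> at \<open>g xbar\<close> in direction
  \<open>\<nabla>g(xbar) d\<close>. Finally, the bound passes from admissible constants \<open>\<kappa>\<close> to their
  infimum, the modulus, because the directional normal cone is closed.
\<close>

lemma has_derivative_norm_power2:
  fixes f :: "'a::real_normed_vector \<Rightarrow> 'b::real_inner"
  assumes "(f has_derivative f') (at y)"
  shows "((\<lambda>x. norm (f x)^2) has_derivative (\<lambda>h. 2 * inner (f y) (f' h))) (at y)"
  unfolding power2_norm_eq_inner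
  using has_derivative_inner[OF assms assms] by (simp add: inner_commute)

lemma has_derivative_sqrt_norm_power2:
  fixes f :: "'a::real_normed_vector \<Rightarrow> 'b::real_inner"
  assumes f: "(f has_derivative f') (at y)" and c: "c > 0"
  shows "((\<lambda>x. sqrt (norm (f x)^2 + c)) has_derivative
          (\<lambda>h. inner (f y) (f' h) / sqrt (norm (f y)^2 + c))) (at y)"
proof -
  have q: "norm (f y)^2 + c > 0" using c by (simp add: add_nonneg_pos)
  have "((\<lambda>x. sqrt (norm (f x)^2 + c)) has_derivative
          (\<lambda>h. (2 * inner (f y) (f' h) + 0) * (inverse (sqrt (norm (f y)^2 + c)) / 2))) (at y)"
  proof (rule DERIV_compose_FDERIV[where f = sqrt])
    show "DERIV sqrt (norm (f y)^2 + c) :> inverse (sqrt (norm (f y)^2 + c)) / 2"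
      using DERIV_real_sqrt[OF q] .
  qed (rule has_derivative_add[OF has_derivative_norm_power2[OF f] has_derivative_const])
  then show ?thesis by (simp add: field_simps)
qed

lemma local_min_gradient_eq_0:
  fixes f :: "'a::real_inner \<Rightarrow> real"
  assumes "(f has_derivative (\<lambda>h. inner w h)) (at y)" "y \<in> S" "open S" "\<And>z. z \<in> S \<Longrightarrow> f y \<le> f z"
  shows "w = 0"
proof -
  have "(\<lambda>h. inner w h) = (\<lambda>h. 0)"
    using differential_zero_maxmin[OF assms(2,3,1)] assms(4) by blast
  then have "inner w w = 0" by metis
  then show ?thesis by simp
qed

lemma difference_quotient_tendsto:
  fixes g :: "'a::real_normed_vector \<Rightarrow> 'b::real_normed_vector"
  assumes g: "(g has_derivative g') (at x)" and t: "\<And>k. t k > 0" "t \<longlonglongrightarrow> 0" and e: "e \<longlonglongrightarrow> d"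
  shows "(\<lambda>k. (g (x + t k *\<^sub>R e k) - g x) /\<^sub>R t k) \<longlonglongrightarrow> g' d"
proof -
  have lin: "bounded_linear g'" using g by (rule has_derivative_bounded_linear)
  define \<rho> where "\<rho> y = norm (g y - g x - g' (y - x)) / norm (y - x)" for y
  have "isCont \<rho> x" \<comment> \<open>because \<open>\<rho> x = 0 / 0 = 0\<close>\<close>
    using g unfolding has_derivative_iff_norm isCont_def \<rho>_def by simp
  moreover have "(\<lambda>k. x + t k *\<^sub>R e k) \<longlonglongrightarrow> x"
    using tendsto_add[OF tendsto_const tendsto_scaleR[OF t(2) e]] by simp
  ultimately have "(\<lambda>k. \<rho> (x + t k *\<^sub>R e k)) \<longlonglongrightarrow> \<rho> x"
    by (rule isCont_tendsto_compose)
  then have \<rho>_lim: "(\<lambda>k. \<rho> (x + t k *\<^sub>R e k) * norm (e k)) \<longlonglongrightarrow> 0"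
    using tendsto_mult[OF _ tendsto_norm[OF e]] by (force simp: \<rho>_def)
  have residual: "norm ((g (x + t k *\<^sub>R e k) - g x) /\<^sub>R t k - g' (e k)) = \<rho> (x + t k *\<^sub>R e k) * norm (e k)"
    for k
  proof -
    have "(g (x + t k *\<^sub>R e k) - g x) /\<^sub>R t k - g' (e k)
        = (g (x + t k *\<^sub>R e k) - g x - g' (t k *\<^sub>R e k)) /\<^sub>R t k"
      using t(1)[of k] by (simp add: linear_simps[OF lin] algebra_simps)
    then have "norm ((g (x + t k *\<^sub>R e k) - g x) /\<^sub>R t k - g' (e k))
        = norm (g (x + t k *\<^sub>R e k) - g x - g' (t k *\<^sub>R e k)) / t k"
      using t(1)[of k] by (simp add: divide_inverse_commute)
    moreover have "\<rho> (x + t k *\<^sub>R e k) * norm (e k)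
        = norm (g (x + t k *\<^sub>R e k) - g x - g' (t k *\<^sub>R e k)) / t k"
    proof (cases "e k = 0")
      case True
      then show ?thesis by (simp add: \<rho>_def linear_simps[OF lin])
    next
      case False
      then show ?thesis using t(1)[of k] by (simp add: \<rho>_def)
    qed
    ultimately show ?thesis by simp
  qed
  have "(\<lambda>k. (g (x + t k *\<^sub>R e k) - g x) /\<^sub>R t k - g' (e k)) \<longlonglongrightarrow> 0"
    by (rule tendsto_norm_zero_cancel) (simp only: residual \<rho>_lim)
  from tendsto_add[OF this bounded_linear.tendsto[OF lin e]] show ?thesis by simp
qed

lemma nearest_point_quotient_tendsto:
  fixes g :: "'a::real_normed_vector \<Rightarrow> 'b::real_normed_vector"
  assumes g: "(g has_derivative g') (at x)" and t: "\<And>k. t k > 0" "t \<longlonglongrightarrow> 0"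
    and e: "e \<longlonglongrightarrow> d" and e': "e' \<longlonglongrightarrow> d"
    and near: "\<And>k. dist (g (x + t k *\<^sub>R e k)) (z k) \<le> dist (g (x + t k *\<^sub>R e k)) (g (x + t k *\<^sub>R e' k))"
  shows "(\<lambda>k. (z k - g x) /\<^sub>R t k) \<longlonglongrightarrow> g' d"
proof -
  define F where "F u k = (g (x + t k *\<^sub>R u k) - g x) /\<^sub>R t k" for u k
  have F: "F e \<longlonglongrightarrow> g' d" and F': "F e' \<longlonglongrightarrow> g' d"
    unfolding F_def using difference_quotient_tendsto[OF g t] e e' by auto
  have bound: "norm ((z k - g x) /\<^sub>R t k - F e k) \<le> norm (F e k - F e' k)" for k
  proof -
    have "(z k - g x) /\<^sub>R t k - F e k = (z k - g (x + t k *\<^sub>R e k)) /\<^sub>R t k"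
      by (simp add: F_def scaleR_diff_right)
    then have "norm ((z k - g x) /\<^sub>R t k - F e k) = dist (g (x + t k *\<^sub>R e k)) (z k) / t k"
      using t(1)[of k] by (simp add: dist_norm norm_minus_commute divide_inverse_commute)
    also have "\<dots> \<le> dist (g (x + t k *\<^sub>R e k)) (g (x + t k *\<^sub>R e' k)) / t k"
      using near t(1)[of k] by (simp add: divide_right_mono)
    also have "\<dots> = norm (F e k - F e' k)"
      using t(1)[of k] by (simp add: F_def dist_norm divide_inverse_commute flip: scaleR_diff_right)
    finally show ?thesis .
  qed
  have "(\<lambda>k. norm (F e k - F e' k)) \<longlonglongrightarrow> 0"
    using tendsto_norm[OF tendsto_diff[OF F F']] by simp
  then have "(\<lambda>k. (z k - g x) /\<^sub>R t k - F e k) \<longlonglongrightarrow> 0"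
    by (rule Lim_null_comparison[OF always_eventually[OF allI[OF bound]]])
  from tendsto_add[OF this F] show ?thesis by simp
qed

lemma tendsto_direction_of_close_points:
  fixes x :: "'a::real_normed_vector"
  assumes t: "\<And>k. t k > 0" and e: "e \<longlonglongrightarrow> d" and \<epsilon>: "\<epsilon> \<longlonglongrightarrow> 0"
    and close: "\<And>k. norm (y k - (x + t k *\<^sub>R e k)) \<le> \<epsilon> k * t k"
  shows "(\<lambda>k. (y k - x) /\<^sub>R t k) \<longlonglongrightarrow> d"
proof -
  have "norm ((y k - x) /\<^sub>R t k - e k) \<le> \<epsilon> k" for k
  proof -
    have "(y k - x) /\<^sub>R t k - e k = (y k - (x + t k *\<^sub>R e k)) /\<^sub>R t k"
      using t[of k] by (simp add: algebra_simps)
    then have "norm ((y k - x) /\<^sub>R t k - e k) = norm (y k - (x + t k *\<^sub>R e k)) / t k"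
      using t[of k] by (simp add: divide_inverse_commute)
    also have "\<dots> \<le> \<epsilon> k"
      using close[of k] t[of k] by (simp add: pos_divide_le_eq)
    finally show ?thesis .
  qed
  then have "(\<lambda>k. (y k - x) /\<^sub>R t k - e k) \<longlonglongrightarrow> 0"
    by (rule Lim_null_comparison[OF always_eventually[OF allI] \<epsilon>])
  from tendsto_add[OF this e] show ?thesis by simp
qed

lemma proximal_normal_in_frechet_normal:
  fixes p z :: "'a::euclidean_space"
  assumes z: "z \<in> K" and nearest: "\<And>y. y \<in> K \<Longrightarrow> dist p z \<le> dist p y" and a: "a \<ge> 0"
  shows "a *\<^sub>R (p - z) \<in> frechet_normal K z"
proof -
  have quadratic: "2 * inner (p - z) (y - z) \<le> norm (y - z)^2" if "y \<in> K" for y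
  proof -
    have "norm (p - z)^2 \<le> norm ((p - z) - (y - z))^2"
      using nearest[OF that] by (simp add: dist_norm power_mono)
    then show ?thesis
      by (simp add: power2_norm_eq_inner inner_diff_left inner_diff_right inner_commute)
  qed
  have "\<exists>r>0. \<forall>y\<in>K. norm (y - z) < r \<longrightarrow> a * inner (p - z) (y - z) \<le> e * norm (y - z)"
    if e: "e > 0" for e
  proof (intro exI[of _ "2 * e / (a + 1)"] conjI ballI impI)
    fix y assume y: "y \<in> K" and close: "norm (y - z) < 2 * e / (a + 1)"
    have "a * norm (y - z) \<le> (a + 1) * norm (y - z)" by (simp add: mult_right_mono)
    also have "\<dots> \<le> 2 * e" using close a by (simp add: field_simps)
    finally have "a * norm (y - z)^2 \<le> 2 * e * norm (y - z)"
      by (simp add: power2_eq_square mult_right_mono mult.assoc[symmetric])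
    moreover have "a * (2 * inner (p - z) (y - z)) \<le> a * norm (y - z)^2"
      using quadratic[OF y] a by (rule mult_left_mono)
    ultimately show "a * inner (p - z) (y - z) \<le> e * norm (y - z)" by linarith
  qed (use e a in simp)
  then show ?thesis using z by (simp add: frechet_normal_def)
qed

lemma frechet_normal_error_bound_penalty:
  fixes v x :: "'a::euclidean_space"
  assumes C: "closed C" and x: "x \<in> C" and \<epsilon>: "\<epsilon> > 0" and sr: "2 * s < r"
    and frechet: "\<forall>y\<in>C. norm (y - x) < r \<longrightarrow> inner v (y - x) \<le> \<epsilon> * norm (y - x)"
    and bound: "\<forall>y\<in>cball x s. infdist y C \<le> \<kappa> * \<phi> y"
  shows "\<forall>y\<in>cball x s. inner v (y - x) \<le> \<epsilon> * norm (y - x) + ((\<epsilon> + norm v) * \<kappa>) * \<phi> y"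
proof
  fix y assume y: "y \<in> cball x s"
  obtain p where p: "p \<in> C" and p_dist: "infdist y C = dist y p"
    using infdist_attains_inf[OF C] x by blast
  have yp: "norm (y - p) \<le> norm (y - x)"
    using infdist_le[OF x, of y] p_dist by (simp add: dist_norm)
  have yx: "norm (y - x) \<le> s" using y by (simp add: dist_norm norm_minus_commute)
  have px: "norm (p - x) \<le> norm (y - p) + norm (y - x)"
    using norm_triangle_ineq4[of "y - x" "y - p"] by (simp add: algebra_simps)
  then have "inner v (p - x) \<le> \<epsilon> * norm (p - x)"
    using frechet p yp yx sr by simp
  also have "\<dots> \<le> \<epsilon> * (norm (y - p) + norm (y - x))"
    using px \<epsilon> by (simp add: mult_left_mono)
  finally have "inner v (y - x) \<le> \<epsilon> * norm (y - x) + \<epsilon> * norm (y - p) + inner v (y - p)"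
    by (simp add: inner_diff_right algebra_simps)
  also have "\<dots> \<le> \<epsilon> * norm (y - x) + (\<epsilon> + norm v) * norm (y - p)"
    using Cauchy_Schwarz_ineq2[of v "y - p"] by (simp add: algebra_simps)
  also have "\<dots> \<le> \<epsilon> * norm (y - x) + (\<epsilon> + norm v) * (\<kappa> * \<phi> y)"
    using bspec[OF bound y] p_dist \<epsilon> by (simp add: dist_norm mult_left_mono)
  finally show "inner v (y - x) \<le> \<epsilon> * norm (y - x) + ((\<epsilon> + norm v) * \<kappa>) * \<phi> y"
    by (simp add: mult.assoc)
qed

definition smoothed_penalty :: "'a::real_inner \<Rightarrow> 'a \<Rightarrow> real \<Rightarrow> real \<Rightarrow> real \<Rightarrow> 'a \<Rightarrow> real \<Rightarrow> real"
  where "smoothed_penalty v x c L \<eta> y p = - inner v (y - x) + c * norm (y - x)^2 + L * sqrt (p^2 + \<eta>^2)"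

lemma smoothed_penalty_min_in_ball:
  fixes x v :: "'a::euclidean_space"
  assumes \<phi>: "continuous_on (cball x s) \<phi>" "\<phi> x = 0" and s: "s > 0" and \<epsilon>: "\<epsilon> > 0" and L: "L > 0"
    and penalty: "\<forall>y\<in>cball x s. inner v (y - x) \<le> \<epsilon> * norm (y - x) + L * \<phi> y"
  obtains y where "y \<in> ball x s" "\<And>u. u \<in> cball x s \<Longrightarrow>
    smoothed_penalty v x (2 * \<epsilon> / s) L (\<epsilon> * s / (2 * L)) y (\<phi> y)
      \<le> smoothed_penalty v x (2 * \<epsilon> / s) L (\<epsilon> * s / (2 * L)) u (\<phi> u)"
proof -
  define G where "G y = smoothed_penalty v x (2 * \<epsilon> / s) L (\<epsilon> * s / (2 * L)) y (\<phi> y)" for y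
  have "continuous_on (cball x s) G"
    unfolding G_def smoothed_penalty_def by (intro continuous_intros \<phi>(1))
  then obtain y where y: "y \<in> cball x s" and ymin: "\<And>u. u \<in> cball x s \<Longrightarrow> G y \<le> G u"
    using continuous_attains_inf[OF compact_cball] s by (metis empty_iff centre_in_cball less_imp_le)
  have "y \<in> ball x s"
  proof (rule ccontr)
    assume "y \<notin> ball x s"
    with y have ny: "norm (y - x) = s" by (simp add: dist_norm norm_minus_commute)
    have "L * \<phi> y \<le> L * sqrt (\<phi> y ^ 2 + (\<epsilon> * s / (2 * L))^2)"
      using L by (simp add: real_le_rsqrt)
    moreover have "G y = - inner v (y - x) + 2 * \<epsilon> * s + L * sqrt (\<phi> y ^ 2 + (\<epsilon> * s / (2 * L))^2)"
      using ny s by (simp add: G_def smoothed_penalty_def power2_eq_square)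
    ultimately have "\<epsilon> * s \<le> G y"
      using bspec[OF penalty y] ny by simp
    also have "G y \<le> G x" using ymin s by simp
    also have "G x = \<epsilon> * s / 2" using \<phi>(2) \<epsilon> s L by (simp add: G_def smoothed_penalty_def)
    finally show False using \<epsilon> s by simp
  qed
  then show ?thesis using that ymin by (simp add: G_def)
qed

lemma smoothed_penalty_stationarity:
  fixes g :: "real^'n \<Rightarrow> real^'m" and J :: "real^'n \<Rightarrow> real^'n^'m"
  assumes deriv: "\<And>x. (g has_derivative (\<lambda>h. J x *v h)) (at x)"
    and c: "c > 0" and \<eta>: "\<eta> > 0" and y: "y \<in> ball x s"
    and min: "\<And>u. u \<in> ball x s \<Longrightarrow>
      smoothed_penalty v x c L \<eta> y (norm (g y - z)) \<le> smoothed_penalty v x c L \<eta> u (norm (g u - z))"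
  shows "norm (v - transpose (J y) *v ((L / sqrt (norm (g y - z)^2 + \<eta>^2)) *\<^sub>R (g y - z)))
           \<le> 2 * c * s"
proof -
  define Q where "Q = sqrt (norm (g y - z)^2 + \<eta>^2)"
  define lam where "lam = (L / Q) *\<^sub>R (g y - z)"
  define w where "w = - v + (2 * c) *\<^sub>R (y - x) + transpose (J y) *v lam"
  have dg: "((\<lambda>u. g u - z) has_derivative (\<lambda>h. J y *v h)) (at y)"
    using has_derivative_diff[OF deriv has_derivative_const] by simp
  have dx: "((\<lambda>u. u - x) has_derivative (\<lambda>h. h)) (at y)"
    using has_derivative_diff[OF has_derivative_ident has_derivative_const] by simp
  have "((\<lambda>u. smoothed_penalty v x c L \<eta> u (norm (g u - z))) has_derivative
      (\<lambda>h. - inner v h + c * (2 * inner (y - x) h) + L * (inner (g y - z) (J y *v h) / Q))) (at y)"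
    unfolding Q_def smoothed_penalty_def
    by (intro has_derivative_add has_derivative_minus has_derivative_mult_right
        has_derivative_norm_power2 has_derivative_sqrt_norm_power2 dx dg
        has_derivative_inner_right[OF dx]) (use \<eta> in simp)
  moreover have "inner w h = - inner v h + c * (2 * inner (y - x) h) + L * (inner (g y - z) (J y *v h) / Q)"
    for h
    by (simp add: w_def lam_def inner_add_left inner_diff_left dot_lmul_matrix)
  ultimately have "w = 0"
    using local_min_gradient_eq_0[OF _ y open_ball] min by simp
  then have "v - transpose (J y) *v lam = (2 * c) *\<^sub>R (y - x)"
    by (simp add: w_def algebra_simps)
  moreover have "norm (y - x) \<le> s" using y by (simp add: dist_norm norm_minus_commute)
  ultimately show ?thesis using c by (simp add: lam_def Q_def)
qed

lemma penalized_normal_multiplier: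
  fixes g :: "real^'n \<Rightarrow> real^'m" and J :: "real^'n \<Rightarrow> real^'n^'m"
  assumes deriv: "\<And>x. (g has_derivative (\<lambda>h. J x *v h)) (at x)"
    and K: "closed K" and gx: "g x \<in> K" and s: "s > 0" and \<epsilon>: "\<epsilon> > 0" and L: "L > 0"
    and penalty: "\<forall>y\<in>cball x s. inner v (y - x) \<le> \<epsilon> * norm (y - x) + L * infdist (g y) K"
  obtains y z lam where "y \<in> ball x s" "z \<in> K" "dist (g y) z \<le> dist (g y) (g x)"
    "lam \<in> frechet_normal K z" "norm lam \<le> L" "norm (v - transpose (J y) *v lam) \<le> 4 * \<epsilon>"
proof -
  let ?P = "smoothed_penalty v x (2 * \<epsilon> / s) L (\<epsilon> * s / (2 * L))"
  have cont: "continuous_on (cball x s) (\<lambda>y. infdist (g y) K)"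
    using has_derivative_continuous[OF deriv]
    by (intro continuous_intros) (auto simp: continuous_at_imp_continuous_on)
  have "infdist (g x) K = 0" using gx by simp
  from smoothed_penalty_min_in_ball[OF cont this s \<epsilon> L penalty]
  obtain y where y: "y \<in> ball x s"
    and ymin: "\<And>u. u \<in> cball x s \<Longrightarrow> ?P y (infdist (g y) K) \<le> ?P u (infdist (g u) K)"
    by blast
  obtain z where z: "z \<in> K" and z_dist: "infdist (g y) K = dist (g y) z"
    using infdist_attains_inf[OF K] gx by blast
  have z_nearest: "dist (g y) z \<le> dist (g y) u" if "u \<in> K" for u
    using infdist_le[OF that, of "g y"] z_dist by simp
  define Q where "Q = sqrt (norm (g y - z)^2 + (\<epsilon> * s / (2 * L))^2)"
  have Q: "Q > 0" "norm (g y - z) \<le> Q"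
    using \<epsilon> s L by (auto simp: Q_def add_nonneg_pos real_le_rsqrt)
  define lam where "lam = (L / Q) *\<^sub>R (g y - z)"
  have "norm (v - transpose (J y) *v lam) \<le> 2 * (2 * \<epsilon> / s) * s"
    unfolding lam_def Q_def
  proof (rule smoothed_penalty_stationarity[OF deriv _ _ y])
    fix u assume "u \<in> ball x s"
    \<comment> \<open>Replacing \<open>infdist (g u) K\<close> by \<open>dist (g u) z\<close> gives a differentiable majorant that
       touches at \<open>y\<close>.\<close>
    have "?P y (norm (g y - z)) \<le> ?P u (infdist (g u) K)"
      using ymin[of u] \<open>u \<in> ball x s\<close> z_dist by (simp add: dist_norm)
    also have "\<dots> \<le> ?P u (norm (g u - z))"
      using power_mono[OF infdist_le[OF z, of "g u"] infdist_nonneg] L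
      by (simp add: smoothed_penalty_def dist_norm)
    finally show "?P y (norm (g y - z)) \<le> ?P u (norm (g u - z))" .
  qed (use \<epsilon> s L in auto)
  then have "norm (v - transpose (J y) *v lam) \<le> 4 * \<epsilon>" using s by simp
  moreover have "norm lam \<le> L"
    using mult_left_mono[OF Q(2), of "L / Q"] L Q(1) by (simp add: lam_def)
  moreover have "lam \<in> frechet_normal K z"
    unfolding lam_def using proximal_normal_in_frechet_normal[OF z z_nearest] L Q(1) by simp
  ultimately show ?thesis
    using that y z z_nearest[OF gx] by blast
qed

lemma fuzzy_multiplier_rule:
  fixes g :: "real^'n \<Rightarrow> real^'m" and J :: "real^'n \<Rightarrow> real^'n^'m"
  assumes deriv: "\<And>x. (g has_derivative (\<lambda>h. J x *v h)) (at x)"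
    and K: "closed K" and v: "v \<in> frechet_normal (g -` K) x"
    and s: "s > 0" and \<epsilon>: "\<epsilon> > 0" and \<kappa>: "\<kappa> > 0"
    and bound: "\<forall>y\<in>cball x s. infdist y (g -` K) \<le> \<kappa> * infdist (g y) K"
  obtains y z lam where "norm (y - x) < s" "z \<in> K" "dist (g y) z \<le> dist (g y) (g x)"
    "lam \<in> frechet_normal K z" "norm lam \<le> (\<epsilon> + norm v) * \<kappa>"
    "norm (v - transpose (J y) *v lam) \<le> 4 * \<epsilon>"
proof -
  have x: "x \<in> g -` K" using v by (simp add: frechet_normal_def split: if_splits)
  obtain r where r: "r > 0"
    and frechet: "\<forall>y\<in>g -` K. norm (y - x) < r \<longrightarrow> inner v (y - x) \<le> \<epsilon> * norm (y - x)"
    using v \<epsilon> x by (auto simp: frechet_normal_def)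
  define s' where "s' = min s (r / 3)"
  have s': "s' > 0" "s' \<le> s" "2 * s' < r" using s r by (auto simp: s'_def)
  have C: "closed (g -` K)"
    using continuous_closed_vimage[OF K] has_derivative_continuous[OF deriv] by blast
  have "\<forall>y\<in>cball x s'. inner v (y - x) \<le> \<epsilon> * norm (y - x) + ((\<epsilon> + norm v) * \<kappa>) * infdist (g y) K"
    using s' bound by (intro frechet_normal_error_bound_penalty[OF C x \<epsilon> _ frechet]) auto
  moreover have "(\<epsilon> + norm v) * \<kappa> > 0" using \<epsilon> \<kappa> by (simp add: add_pos_nonneg)
  ultimately obtain y z lam where "y \<in> ball x s'" "z \<in> K" "dist (g y) z \<le> dist (g y) (g x)"
    "lam \<in> frechet_normal K z" "norm lam \<le> (\<epsilon> + norm v) * \<kappa>"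
    "norm (v - transpose (J y) *v lam) \<le> 4 * \<epsilon>"
    using penalized_normal_multiplier[OF deriv K _ s'(1) \<epsilon>] x by (metis vimage_eq)
  moreover have "norm (y - x) < s" using \<open>y \<in> ball x s'\<close> s' by (simp add: dist_norm norm_minus_commute)
  ultimately show ?thesis using that by blast
qed

lemma dir_nbhd_memI:
  fixes w d :: "'a::euclidean_space"
  assumes t: "t > 0" and w: "norm (w - t *\<^sub>R d) \<le> \<sigma> * t"
    and \<sigma>: "\<sigma> \<ge> 0" "d = 0 \<or> \<sigma> * (2 + \<rho>) \<le> \<rho> * norm d" and \<delta>: "t * (norm d + \<sigma>) \<le> \<delta>"
    and \<rho>: "\<rho> > 0"
  shows "w \<in> dir_nbhd \<rho> \<delta> d"
proof -
  define p where "p = w - t *\<^sub>R d"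
  have p: "norm p \<le> \<sigma> * t" using w by (simp add: p_def)
  have w_eq: "w = t *\<^sub>R d + p" by (simp add: p_def)
  have w_norm: "\<bar>norm w - t * norm d\<bar> \<le> norm p"
    using norm_triangle_ineq[of "t *\<^sub>R d" p] norm_triangle_ineq4[of w p] t by (simp add: w_eq)
  have "norm w \<le> \<delta>"
    using w_norm p \<delta> by (simp add: algebra_simps)
  moreover have "norm (norm d *\<^sub>R w - norm w *\<^sub>R d) \<le> \<rho> * norm w * norm d"
  proof (cases "d = 0")
    case False
    have "norm (norm d *\<^sub>R w - norm w *\<^sub>R d) = norm ((t * norm d - norm w) *\<^sub>R d + norm d *\<^sub>R p)"
      by (simp add: w_eq algebra_simps)
    also have "\<dots> \<le> \<bar>t * norm d - norm w\<bar> * norm d + norm d * norm p"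
      using norm_triangle_ineq by (metis norm_scaleR abs_norm_cancel)
    also have "\<dots> \<le> 2 * norm p * norm d"
      using mult_right_mono[OF w_norm norm_ge_zero[of d]] by (simp add: abs_minus_commute mult.commute)
    also have "\<dots> \<le> 2 * \<sigma> * t * norm d"
      using p by (simp add: mult_right_mono)
    also have "\<dots> \<le> \<rho> * (t * norm d - \<sigma> * t) * norm d"
    proof -
      have "\<sigma> * (2 + \<rho>) * t \<le> \<rho> * norm d * t"
        using \<sigma>(2) False t by (intro mult_right_mono) auto
      then show ?thesis by (intro mult_right_mono) (auto simp: algebra_simps)
    qed
    also have "\<dots> \<le> \<rho> * norm w * norm d"
      using w_norm p \<rho> by (intro mult_right_mono mult_left_mono) auto
    finally show ?thesis .
  qed simp
  ultimately show ?thesis by (simp add: dir_nbhd_def)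
qed

lemma eventually_cball_subset_dir_nbhd:
  fixes d :: "'a::euclidean_space"
  assumes \<rho>: "\<rho> > 0" and \<delta>: "\<delta> > 0"
  obtains \<sigma> where "\<sigma> > 0" "\<And>t e. (\<And>k. (t :: nat \<Rightarrow> real) k > 0) \<Longrightarrow> t \<longlonglongrightarrow> 0 \<Longrightarrow> e \<longlonglongrightarrow> d \<Longrightarrow>
      eventually (\<lambda>k. cball (t k *\<^sub>R e k) (\<sigma> * t k) \<subseteq> dir_nbhd \<rho> \<delta> d) sequentially"
proof -
  define \<sigma> where "\<sigma> = (if d = 0 then 1 else \<rho> * norm d / (2 + \<rho>))"
  have \<sigma>: "\<sigma> > 0" "d = 0 \<or> \<sigma> * (2 + \<rho>) \<le> \<rho> * norm d"
    using \<rho> by (auto simp: \<sigma>_def)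
  show ?thesis
  proof (rule that[of "\<sigma> / 2"])
    fix t :: "nat \<Rightarrow> real" and e
    assume t: "\<And>k. t k > 0" "t \<longlonglongrightarrow> 0" and e: "e \<longlonglongrightarrow> d"
    have "eventually (\<lambda>k. dist (e k) d < \<sigma> / 2) sequentially"
      using e half_gt_zero[OF \<sigma>(1)] by (rule tendstoD)
    moreover have "(\<lambda>k. t k * (norm d + \<sigma>)) \<longlonglongrightarrow> 0"
      using tendsto_mult_left_zero[OF t(2)] .
    then have "eventually (\<lambda>k. t k * (norm d + \<sigma>) < \<delta>) sequentially"
      using \<delta> by (rule order_tendstoD)
    ultimately show "eventually (\<lambda>k. cball (t k *\<^sub>R e k) (\<sigma> / 2 * t k) \<subseteq> dir_nbhd \<rho> \<delta> d) sequentially"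
    proof eventually_elim
      case (elim k)
      show ?case
      proof
        fix w assume "w \<in> cball (t k *\<^sub>R e k) (\<sigma> / 2 * t k)"
        then have "norm (w - t k *\<^sub>R e k) \<le> \<sigma> / 2 * t k"
          by (simp add: dist_norm norm_minus_commute)
        moreover have "norm (t k *\<^sub>R e k - t k *\<^sub>R d) \<le> \<sigma> / 2 * t k"
          using elim t(1)[of k] by (simp add: dist_norm flip: scaleR_diff_right)
        ultimately have "norm ((w - t k *\<^sub>R e k) + (t k *\<^sub>R e k - t k *\<^sub>R d)) \<le> \<sigma> * t k"
          using norm_triangle_ineq[of "w - t k *\<^sub>R e k" "t k *\<^sub>R e k - t k *\<^sub>R d"] by linarith
        then show "w \<in> dir_nbhd \<rho> \<delta> d"
          using dir_nbhd_memI[OF t(1) _ _ \<sigma>(2) _ \<rho>] \<sigma>(1) elim by simp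
      qed
    qed
  qed (use \<sigma> in simp)
qed

lemma mscq_triple_fuzzy_multiplier:
  fixes g :: "real^'n \<Rightarrow> real^'m" and J :: "real^'n \<Rightarrow> real^'n^'m"
  assumes deriv: "\<And>x. (g has_derivative (\<lambda>h. J x *v h)) (at x)" and K: "closed K"
    and triple: "mscq_triple g K xbar d \<rho> \<delta> \<kappa>"
    and nbhd: "cball (t *\<^sub>R e) (\<sigma> * t) \<subseteq> dir_nbhd \<rho> \<delta> d"
    and t: "t > 0" and \<sigma>: "\<sigma> > 0" and \<epsilon>: "\<epsilon> > 0"
    and w: "w \<in> frechet_normal (g -` K) (xbar + t *\<^sub>R e)"
  obtains y z lam where "norm (y - (xbar + t *\<^sub>R e)) < \<epsilon> * t"
    "dist (g y) z \<le> dist (g y) (g (xbar + t *\<^sub>R e))" "lam \<in> frechet_normal K z"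
    "norm lam \<le> (\<epsilon> + norm w) * \<kappa>" "norm (w - transpose (J y) *v lam) \<le> 4 * \<epsilon>"
proof -
  have \<kappa>: "\<kappa> > 0"
    and bound: "\<forall>y \<in> (\<lambda>u. xbar + u) ` dir_nbhd \<rho> \<delta> d. infdist y (g -` K) \<le> \<kappa> * infdist (g y) K"
    using triple by (auto simp: mscq_triple_def)
  have "infdist y (g -` K) \<le> \<kappa> * infdist (g y) K"
    if "y \<in> cball (xbar + t *\<^sub>R e) (min (\<sigma> * t) (\<epsilon> * t))" for y
  proof -
    have "y - xbar \<in> cball (t *\<^sub>R e) (\<sigma> * t)"
      using that by (simp add: dist_norm algebra_simps)
    then show ?thesis
      using bound nbhd by (metis add.commute diff_add_cancel image_eqI subsetD)
  qed
  moreover have "min (\<sigma> * t) (\<epsilon> * t) > 0" using \<sigma> \<epsilon> t by simp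
  ultimately show ?thesis
    using fuzzy_multiplier_rule[OF deriv K w _ \<epsilon> \<kappa>] that by (metis min_less_iff_conj)
qed

lemma dir_normal_seqE:
  assumes v: "v \<in> dir_normal S x d"
    and P: "\<And>t e. (\<And>k. (t :: nat \<Rightarrow> real) k > 0) \<Longrightarrow> t \<longlonglongrightarrow> 0 \<Longrightarrow> e \<longlonglongrightarrow> d \<Longrightarrow>
      eventually (\<lambda>k. P (t k) (e k)) sequentially"
  obtains t e vv where "\<And>k. t k > 0" "t \<longlonglongrightarrow> 0" "e \<longlonglongrightarrow> d" "vv \<longlonglongrightarrow> v"
    "\<And>k. vv k \<in> frechet_normal S (x + t k *\<^sub>R e k)" "\<And>k. P (t k) (e k)"
proof -
  obtain t e vv where t: "\<forall>k. t k > 0" "t \<longlonglongrightarrow> 0" and e: "e \<longlonglongrightarrow> d" and vv: "vv \<longlonglongrightarrow> v"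
    and normal: "\<forall>k. vv k \<in> frechet_normal S (x + t k *\<^sub>R e k)"
    using v unfolding dir_normal_def by blast
  obtain N where "\<And>k. k \<ge> N \<Longrightarrow> P (t k) (e k)"
    using P[OF _ t(2) e] t(1) by (auto simp: eventually_sequentially)
  then show ?thesis
    using that[of "\<lambda>k. t (k + N)" "\<lambda>k. e (k + N)" "\<lambda>k. vv (k + N)"] t normal
      LIMSEQ_ignore_initial_segment[OF t(2)] LIMSEQ_ignore_initial_segment[OF e]
      LIMSEQ_ignore_initial_segment[OF vv]
    by simp
qed

lemma dir_normal_approx_iff:
  "v \<in> dir_normal S x d \<longleftrightarrow> (\<forall>\<epsilon>>0. \<exists>t e w. 0 < t \<and> t < \<epsilon> \<and> norm (e - d) < \<epsilon> \<and> norm (w - v) < \<epsilon>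
      \<and> w \<in> frechet_normal S (x + t *\<^sub>R e))"
  (is "_ \<longleftrightarrow> (\<forall>\<epsilon>>0. \<exists>t e w. ?approx \<epsilon> t e w)")
proof
  assume "v \<in> dir_normal S x d"
  then obtain t e vv where t: "\<forall>k. t k > 0" "t \<longlonglongrightarrow> 0" and e: "e \<longlonglongrightarrow> d" and vv: "vv \<longlonglongrightarrow> v"
    and normal: "\<forall>k. vv k \<in> frechet_normal S (x + t k *\<^sub>R e k)"
    unfolding dir_normal_def by blast
  show "\<forall>\<epsilon>>0. \<exists>t e w. ?approx \<epsilon> t e w"
  proof (intro allI impI)
    fix \<epsilon> :: real assume \<epsilon>: "\<epsilon> > 0"
    have "eventually (\<lambda>k. dist (t k) 0 < \<epsilon> \<and> dist (e k) d < \<epsilon> \<and> dist (vv k) v < \<epsilon>) sequentially"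
      by (intro eventually_conj tendstoD[OF t(2) \<epsilon>] tendstoD[OF e \<epsilon>] tendstoD[OF vv \<epsilon>])
    then obtain k where "dist (t k) 0 < \<epsilon>" "dist (e k) d < \<epsilon>" "dist (vv k) v < \<epsilon>"
      unfolding eventually_sequentially by blast
    then show "\<exists>t e w. ?approx \<epsilon> t e w"
      using t(1) normal by (intro exI[of _ "t k"] exI[of _ "e k"] exI[of _ "vv k"]) (auto simp: dist_norm)
  qed
next
  assume "\<forall>\<epsilon>>0. \<exists>t e w. ?approx \<epsilon> t e w"
  then have "\<forall>k. \<exists>t e w. ?approx (inverse (real (Suc k))) t e w"
    by simp
  then obtain t e w where tew: "\<And>k. ?approx (inverse (real (Suc k))) (t k) (e k) (w k)"
    by metis
  have "norm (t k) \<le> inverse (real (Suc k))" "norm (e k - d) \<le> inverse (real (Suc k))"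
    "norm (w k - v) \<le> inverse (real (Suc k))" for k
    using tew[of k] by auto
  then have "t \<longlonglongrightarrow> 0" "(\<lambda>k. e k - d) \<longlonglongrightarrow> 0" "(\<lambda>k. w k - v) \<longlonglongrightarrow> 0"
    by (intro Lim_null_comparison[OF always_eventually LIMSEQ_inverse_real_of_nat] allI; simp)+
  then have "t \<longlonglongrightarrow> 0" "e \<longlonglongrightarrow> d" "w \<longlonglongrightarrow> v"
    by (simp_all add: LIM_zero_iff)
  then show "v \<in> dir_normal S x d"
    unfolding dir_normal_def using tew by blast
qed

lemma closed_dir_normal: "closed (dir_normal S x d)"
  unfolding closed_sequential_limits
proof (intro allI impI)
  fix f l assume f: "(\<forall>j. f j \<in> dir_normal S x d) \<and> f \<longlonglongrightarrow> l"
  show "l \<in> dir_normal S x d"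
    unfolding dir_normal_approx_iff
  proof (intro allI impI)
    fix \<epsilon> :: real assume \<epsilon>: "\<epsilon> > 0"
    then obtain j where j: "dist (f j) l < \<epsilon> / 2"
      using f tendstoD[of f l sequentially "\<epsilon> / 2"] eventually_sequentially by force
    obtain t e w where "0 < t" "t < \<epsilon> / 2" "norm (e - d) < \<epsilon> / 2" "norm (w - f j) < \<epsilon> / 2"
      "w \<in> frechet_normal S (x + t *\<^sub>R e)"
      using f \<epsilon> unfolding dir_normal_approx_iff by (meson half_gt_zero)
    moreover have "norm (w - l) \<le> norm (w - f j) + dist (f j) l"
      using norm_triangle_ineq[of "w - f j" "f j - l"] by (simp add: dist_norm)
    ultimately show "\<exists>t e w. 0 < t \<and> t < \<epsilon> \<and> norm (e - d) < \<epsilon> \<and> norm (w - l) < \<epsilon>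
      \<and> w \<in> frechet_normal S (x + t *\<^sub>R e)"
      using j by (intro exI[of _ t] exI[of _ e] exI[of _ w]) auto
  qed
qed

lemma tendsto_transpose_matrix_vector_mult:
  fixes A :: "nat \<Rightarrow> real^'n^'m" and y :: "nat \<Rightarrow> real^'m"
  assumes "A \<longlonglongrightarrow> A0" "y \<longlonglongrightarrow> y0"
  shows "(\<lambda>k. transpose (A k) *v y k) \<longlonglongrightarrow> transpose A0 *v y0"
  unfolding transpose_matrix_vector vector_matrix_mult_def
  by (intro vec_tendstoI) (simp, intro tendsto_intros assms)

lemma multiplier_subseq_limit:
  fixes lam :: "nat \<Rightarrow> real^'m" and A :: "nat \<Rightarrow> real^'n^'m"
  assumes bound: "\<And>k. norm (lam k) \<le> b k" and b: "b \<longlonglongrightarrow> \<beta>" and A: "A \<longlonglongrightarrow> A0"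
    and u: "u \<longlonglongrightarrow> u0" and residual: "(\<lambda>k. u k - transpose (A k) *v lam k) \<longlonglongrightarrow> 0"
  obtains r l where "strict_mono r" "(lam \<circ> r) \<longlonglongrightarrow> l" "norm l \<le> \<beta>" "u0 = transpose A0 *v l"
proof -
  obtain B where B: "\<And>k. b k \<le> B"
    using convergent_imp_bounded[OF b] by (auto simp: bounded_iff abs_le_iff)
  have "bounded (range lam)"
    by (rule boundedI[where B = B]) (auto intro: order_trans[OF bound B])
  then obtain r l where r: "strict_mono r" and l: "(lam \<circ> r) \<longlonglongrightarrow> l"
    using bounded_imp_convergent_subsequence by blast
  have "norm l \<le> \<beta>"
    by (rule LIMSEQ_le[OF tendsto_norm[OF l] LIMSEQ_subseq_LIMSEQ[OF b r]]) (simp add: bound)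
  moreover have "(\<lambda>k. u (r k) - transpose (A (r k)) *v lam (r k)) \<longlonglongrightarrow> u0 - transpose A0 *v l"
    using LIMSEQ_subseq_LIMSEQ[OF u r] LIMSEQ_subseq_LIMSEQ[OF A r] l
    by (intro tendsto_diff tendsto_transpose_matrix_vector_mult) (auto simp: o_def)
  moreover have "(\<lambda>k. u (r k) - transpose (A (r k)) *v lam (r k)) \<longlonglongrightarrow> 0"
    using LIMSEQ_subseq_LIMSEQ[OF residual r] by (simp add: o_def)
  ultimately show ?thesis
    using that r l LIMSEQ_unique by fastforce
qed

lemma dir_normal_multiplier_limit:
  fixes g :: "real^'n \<Rightarrow> real^'m" and J :: "real^'n \<Rightarrow> real^'n^'m"
  assumes deriv: "\<And>x. (g has_derivative (\<lambda>h. J x *v h)) (at x)" and contJ: "continuous_on UNIV J"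
    and t: "\<And>k. t k > 0" "t \<longlonglongrightarrow> 0" and e: "e \<longlonglongrightarrow> d" and y: "(\<lambda>k. (y k - xbar) /\<^sub>R t k) \<longlonglongrightarrow> d"
    and near: "\<And>k. dist (g (y k)) (z k) \<le> dist (g (y k)) (g (xbar + t k *\<^sub>R e k))"
    and lam: "\<And>k. lam k \<in> frechet_normal K (z k)" "\<And>k. norm (lam k) \<le> b k" and b: "b \<longlonglongrightarrow> \<beta>"
    and vv: "vv \<longlonglongrightarrow> v" and residual: "(\<lambda>k. vv k - transpose (J (y k)) *v lam k) \<longlonglongrightarrow> 0"
  obtains l where "l \<in> dir_normal K (g xbar) (J xbar *v d)" "norm l \<le> \<beta>" "v = transpose (J xbar) *v l"
proof -
  define e' where "e' k = (y k - xbar) /\<^sub>R t k" for k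
  have y_eq: "y = (\<lambda>k. xbar + t k *\<^sub>R e' k)"
    using t(1) by (simp add: e'_def less_imp_neq[symmetric])
  have z_lim: "(\<lambda>k. (z k - g xbar) /\<^sub>R t k) \<longlonglongrightarrow> J xbar *v d"
    using nearest_point_quotient_tendsto[OF deriv t y[folded e'_def] e] near by (simp add: y_eq)
  have "y \<longlonglongrightarrow> xbar"
    using tendsto_add[OF tendsto_const[of xbar] tendsto_scaleR[OF t(2) y[folded e'_def]]]
    by (simp add: y_eq)
  then have "(\<lambda>k. J (y k)) \<longlonglongrightarrow> J xbar"
    using contJ by (simp add: continuous_on_eq_continuous_at isCont_tendsto_compose)
  then obtain r l where r: "strict_mono r" and l: "(lam \<circ> r) \<longlonglongrightarrow> l"
    and "norm l \<le> \<beta>" "v = transpose (J xbar) *v l"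
    by (rule multiplier_subseq_limit[OF lam(2) b _ vv residual])
  moreover have "l \<in> dir_normal K (g xbar) (J xbar *v d)"
    unfolding dir_normal_def
  proof (intro CollectI exI conjI allI)
    show "(t \<circ> r) \<longlonglongrightarrow> 0" "((\<lambda>k. (z k - g xbar) /\<^sub>R t k) \<circ> r) \<longlonglongrightarrow> J xbar *v d"
      using LIMSEQ_subseq_LIMSEQ[OF t(2) r] LIMSEQ_subseq_LIMSEQ[OF z_lim r] by simp_all
    fix k
    show "(t \<circ> r) k > 0" by (simp add: t(1))
    show "(lam \<circ> r) k \<in> frechet_normal K (g xbar + (t \<circ> r) k *\<^sub>R ((\<lambda>k. (z k - g xbar) /\<^sub>R t k) \<circ> r) k)"
      using lam(1) t(1)[of "r k"] by simp
  qed (rule l)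
  ultimately show ?thesis using that by blast
qed

lemma dir_normal_preimage_multiplier:
  fixes g :: "real^'n \<Rightarrow> real^'m" and J :: "real^'n \<Rightarrow> real^'n^'m"
  assumes deriv: "\<And>x. (g has_derivative (\<lambda>h. J x *v h)) (at x)"
    and contJ: "continuous_on UNIV J" and K: "closed K"
    and triple: "mscq_triple g K xbar d \<rho> \<delta> \<kappa>"
    and v: "v \<in> dir_normal (g -` K) xbar d"
  obtains lam where "lam \<in> dir_normal K (g xbar) (J xbar *v d)" "norm lam \<le> \<kappa> * norm v"
    "v = transpose (J xbar) *v lam"
proof -
  have \<rho>: "\<rho> > 0" and \<delta>: "\<delta> > 0" using triple by (auto simp: mscq_triple_def)
  obtain \<sigma> where \<sigma>: "\<sigma> > 0" and cballs: "\<And>t e. (\<And>k. t k > 0) \<Longrightarrow> t \<longlonglongrightarrow> 0 \<Longrightarrow> e \<longlonglongrightarrow> d \<Longrightarrow>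
      eventually (\<lambda>k. cball (t k *\<^sub>R e k) (\<sigma> * t k) \<subseteq> dir_nbhd \<rho> \<delta> d) sequentially"
    using eventually_cball_subset_dir_nbhd[OF \<rho> \<delta>] by blast
  obtain t e vv where t: "\<And>k. t k > 0" "t \<longlonglongrightarrow> 0" and e: "e \<longlonglongrightarrow> d" and vv: "vv \<longlonglongrightarrow> v"
    and normal: "\<And>k. vv k \<in> frechet_normal (g -` K) (xbar + t k *\<^sub>R e k)"
    and nbhd: "\<And>k. cball (t k *\<^sub>R e k) (\<sigma> * t k) \<subseteq> dir_nbhd \<rho> \<delta> d"
    using dir_normal_seqE[where P = "\<lambda>s w. cball (s *\<^sub>R w) (\<sigma> * s) \<subseteq> dir_nbhd \<rho> \<delta> d", OF v cballs]
    by blast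
  define \<epsilon> where "\<epsilon> k = inverse (real (Suc k))" for k
  have "\<exists>y z lam. norm (y - (xbar + t k *\<^sub>R e k)) < \<epsilon> k * t k
      \<and> dist (g y) z \<le> dist (g y) (g (xbar + t k *\<^sub>R e k)) \<and> lam \<in> frechet_normal K z
      \<and> norm lam \<le> (\<epsilon> k + norm (vv k)) * \<kappa> \<and> norm (vv k - transpose (J y) *v lam) \<le> 4 * \<epsilon> k" for k
    using mscq_triple_fuzzy_multiplier[OF deriv K triple nbhd t(1) \<sigma> _ normal, of "\<epsilon> k"]
    by (metis \<epsilon>_def inverse_positive_iff_positive of_nat_0_less_iff zero_less_Suc)
  then obtain y z lam where y: "\<And>k. norm (y k - (xbar + t k *\<^sub>R e k)) < \<epsilon> k * t k"
    and z: "\<And>k. dist (g (y k)) (z k) \<le> dist (g (y k)) (g (xbar + t k *\<^sub>R e k))"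
    and lam: "\<And>k. lam k \<in> frechet_normal K (z k)" "\<And>k. norm (lam k) \<le> (\<epsilon> k + norm (vv k)) * \<kappa>"
    and residual: "\<And>k. norm (vv k - transpose (J (y k)) *v lam k) \<le> 4 * \<epsilon> k"
    by metis
  have \<epsilon>_lim: "\<epsilon> \<longlonglongrightarrow> 0" unfolding \<epsilon>_def by (rule LIMSEQ_inverse_real_of_nat)
  have y_dir: "(\<lambda>k. (y k - xbar) /\<^sub>R t k) \<longlonglongrightarrow> d"
    using tendsto_direction_of_close_points[OF t(1) e \<epsilon>_lim] y by (simp add: less_imp_le)
  have "(\<lambda>k. 4 * \<epsilon> k) \<longlonglongrightarrow> 0" using tendsto_mult_right_zero[OF \<epsilon>_lim] .
  then have residual_lim: "(\<lambda>k. vv k - transpose (J (y k)) *v lam k) \<longlonglongrightarrow> 0"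
    by (rule Lim_null_comparison[OF always_eventually[OF allI[OF residual]]])
  have "(\<lambda>k. (\<epsilon> k + norm (vv k)) * \<kappa>) \<longlonglongrightarrow> (0 + norm v) * \<kappa>"
    by (intro tendsto_intros \<epsilon>_lim vv)
  then have bound_lim: "(\<lambda>k. (\<epsilon> k + norm (vv k)) * \<kappa>) \<longlonglongrightarrow> \<kappa> * norm v"
    by (simp add: mult.commute)
  show ?thesis
    by (rule dir_normal_multiplier_limit[OF deriv contJ t e y_dir z lam bound_lim vv residual_lim that])
qed

lemma dir_normal_preimage_multiplier_above_modulus:
  fixes g :: "real^'n \<Rightarrow> real^'m" and J :: "real^'n \<Rightarrow> real^'n^'m"
  assumes deriv: "\<And>x. (g has_derivative (\<lambda>h. J x *v h)) (at x)"
    and contJ: "continuous_on UNIV J" and K: "closed K"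
    and mscq: "mscq_dir g K xbar d" and c: "mscq_modulus g K xbar d < c"
    and v: "v \<in> dir_normal (g -` K) xbar d"
  obtains lam where "lam \<in> dir_normal K (g xbar) (J xbar *v d)" "norm lam \<le> c * norm v"
    "v = transpose (J xbar) *v lam"
proof -
  have "{\<kappa>. \<exists>\<rho> \<delta>. mscq_triple g K xbar d \<rho> \<delta> \<kappa>} \<noteq> {}"
    using mscq by (auto simp: mscq_dir_def)
  from cInf_lessD[OF this c[unfolded mscq_modulus_def]]
  obtain \<rho> \<delta> \<kappa> where triple: "mscq_triple g K xbar d \<rho> \<delta> \<kappa>" and "\<kappa> < c"
    by blast
  obtain lam where "lam \<in> dir_normal K (g xbar) (J xbar *v d)" "norm lam \<le> \<kappa> * norm v"
    "v = transpose (J xbar) *v lam"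
    by (rule dir_normal_preimage_multiplier[OF deriv contJ K triple v])
  moreover have "\<kappa> * norm v \<le> c * norm v" using \<open>\<kappa> < c\<close> by (simp add: mult_right_mono)
  ultimately show ?thesis using that by force
qed

theorem lemma2p6:
  fixes g :: "real^'n \<Rightarrow> real^'m"
    and J :: "real^'n \<Rightarrow> real^'n^'m"
    and K :: "(real^'m) set"
    and xbar d :: "real^'n"
    and \<kappa> :: real
  assumes deriv: "\<And>x. (g has_derivative (\<lambda>h. J x *v h)) (at x)"
    and contJ: "continuous_on UNIV J"
    and closedK: "closed K"
    and xbar: "xbar \<in> g -` K"
    and mscq: "mscq_dir g K xbar d"
    and kappa: "\<kappa> = mscq_modulus g K xbar d"
  shows "dir_normal (g -` K) xbar d \<subseteq>
     {v. \<exists>lam. lam \<in> dir_normal K (g xbar) (J xbar *v d) \<and> norm lam \<le> \<kappa> * norm v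
            \<and> v = transpose (J xbar) *v lam}"
proof
  fix v assume v: "v \<in> dir_normal (g -` K) xbar d"
  have "\<exists>lam. lam \<in> dir_normal K (g xbar) (J xbar *v d)
      \<and> norm lam \<le> (\<kappa> + inverse (real (Suc j))) * norm v \<and> v = transpose (J xbar) *v lam" for j
    by (rule dir_normal_preimage_multiplier_above_modulus[OF deriv contJ closedK mscq _ v,
          where c = "\<kappa> + inverse (real (Suc j))"]) (use kappa in auto)
  then obtain lam where lam: "\<And>j. lam j \<in> dir_normal K (g xbar) (J xbar *v d)"
    "\<And>j. norm (lam j) \<le> (\<kappa> + inverse (real (Suc j))) * norm v" "\<And>j. v = transpose (J xbar) *v lam j"
    by metis
  have bound_lim: "(\<lambda>j. (\<kappa> + inverse (real (Suc j))) * norm v) \<longlonglongrightarrow> \<kappa> * norm v"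
    by (intro tendsto_intros LIMSEQ_inverse_real_of_nat_add)
  have residual_lim: "(\<lambda>j. v - transpose (J xbar) *v lam j) \<longlonglongrightarrow> 0"
    using lam(3) by simp
  obtain r l where l: "(lam \<circ> r) \<longlonglongrightarrow> l" and "norm l \<le> \<kappa> * norm v" "v = transpose (J xbar) *v l"
    by (rule multiplier_subseq_limit[OF lam(2) bound_lim tendsto_const tendsto_const residual_lim])
  moreover have "l \<in> dir_normal K (g xbar) (J xbar *v d)"
    by (rule closed_sequentially[OF closed_dir_normal _ l]) (simp add: lam(1))
  ultimately show "v \<in> {v. \<exists>lam. lam \<in> dir_normal K (g xbar) (J xbar *v d) \<and> norm lam \<le> \<kappa> * norm v
            \<and> v = transpose (J xbar) *v lam}"
    by blast
qed

end
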